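(* Let $\mathrm{2RR}=\textsc{RoundRobin}(\mathrm{ALG}_{\mathrm{fail}},\mathrm{ALG}_{\mathrm{succ}};1,1)$. Then for every instance $I$ of Stochastic Score Classification, $$\mathbb{E}[\mathrm{cost}(\mathrm{2RR},I)]\le 6\cdot \mathbb{E}[\mathrm{cost}(\mathrm{OPT},I)],$$ i.e., $\mathrm{2RR}$ is a 6-approximation algorithm for SSC.
   Context: An instance $I$ of Stochastic Score Classification (SSC) consists of tests $N=\{1,\dots,n\}$, costs $c_j\ge 0$, success probabilities $p_j\in(0,1)$, and integers $0=t_1<t_2<\dots<t_B<t_{B+1}=n+1$. The outcome vector $x\in\{0,1\}^N$ has independent coordinates with $\Pr[x_j=1]=p_j$ (test $j$ succeeds iff $x_j=1$, otherwise it fails). The score $f(x)$ is the unique $i\in\{1,\dots,B\}$ with $t_i\le\|x\|_1\le t_{i+1}-1$. A (possibly adaptive) strategy conducts tests one at a time, each at most once, the choice of the next test possibly depending on outcomes observed so far, and stops as soon as $f(x)$ is determined (i.e., all $x'\in\{0,1\}^N$ agreeing with $x$ on the conducted tests have $f(x')=f(x)$). $\mathrm{cost}(S,I)$ is the random total cost of the tests conducted by strategy $S$ on $I$. $\mathrm{OPT}$ is a fixed strategy minimizing $\mathbb{E}[\mathrm{cost}(S,I)]$ over all adaptive strategies $S$. Let $\sigma_{\mathrm{fail}},\sigma_{\mathrm{succ}}$ be permutations of $N$ (ties broken arbitrarily) such that $c_{\sigma_{\mathrm{fail}}(1)}/(1-p_{\sigma_{\mathrm{fail}}(1)})\le\dots\le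 c_{\sigma_{\mathrm{fail}}(n)}/(1-p_{\sigma_{\mathrm{fail}}(n)})$ and $c_{\sigma_{\mathrm{succ}}(1)}/p_{\sigma_{\mathrm{succ}}(1)}\le\dots\le c_{\sigma_{\mathrm{succ}}(n)}/p_{\sigma_{\mathrm{succ}}(n)}$. $\mathrm{ALG}_{\mathrm{fail}},\mathrm{ALG}_{\mathrm{succ}}$ denote the orders of tests given by $\sigma_{\mathrm{fail}},\sigma_{\mathrm{succ}}$. $\textsc{RoundRobin}(\mathrm{ALG}_1,\dots,\mathrm{ALG}_k;\alpha_1,\dots,\alpha_k)$, for fixed orders $\mathrm{ALG}_h$ of $N$ and weights $\alpha_h>0$: initialize $C_h=0$ for all $h$; while $f(x)$ is not determined, for each $h$ let $\delta_h$ be the cost of the first test in the order $\mathrm{ALG}_h$ that has not yet been conducted by the scheme, choose $h^\star\in\arg\min_h (C_h+\delta_h)/\alpha_h$ (ties arbitrary), conduct that test of $\mathrm{ALG}_{h^\star}$, and set $C_{h^\star}\leftarrow C_{h^\star}+\delta_{h^\star}$. *)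

theory Defs
  imports Complex_Main
begin

text \<open>Tests are N = {1..n}. An outcome vector x is represented by the set X of
succeeding tests (X \<subseteq> {1..n}). Thresholds t 1 = 0 < t 2 < ... < t (B+1) = n+1.\<close>

definition score :: "nat \<Rightarrow> (nat \<Rightarrow> nat) \<Rightarrow> nat \<Rightarrow> nat" where
  "score B t k = (THE i. i \<in> {1..B} \<and> t i \<le> k \<and> k \<le> t (i+1) - 1)"

definition determined :: "nat \<Rightarrow> nat \<Rightarrow> (nat \<Rightarrow> nat) \<Rightarrow> nat set \<Rightarrow> nat set \<Rightarrow> bool" where
  "determined n B t T X \<longleftrightarrow>
     (\<forall>X'. X' \<subseteq> {1..n} \<longrightarrow> X' \<inter> T = X \<inter> T \<longrightarrow> score B t (card X') = score B t (card X))"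

definition prob :: "nat \<Rightarrow> (nat \<Rightarrow> real) \<Rightarrow> nat set \<Rightarrow> real" where
  "prob n p X = (\<Prod>j\<in>X. p j) * (\<Prod>j\<in>{1..n} - X. 1 - p j)"

text \<open>A history is the list of (test, outcome) pairs observed so far.\<close>
definition cost :: "(nat \<Rightarrow> real) \<Rightarrow> (nat \<times> bool) list \<Rightarrow> real" where
  "cost c h = (\<Sum>(j,b)\<leftarrow>h. c j)"

definition expected_cost ::
  "nat \<Rightarrow> (nat \<Rightarrow> real) \<Rightarrow> (nat \<Rightarrow> real) \<Rightarrow> (nat set \<Rightarrow> (nat \<times> bool) list) \<Rightarrow> real" where
  "expected_cost n p c run = (\<Sum>X\<in>Pow {1..n}. prob n p X * cost c (run X))"

definition valid_strategy :: "nat \<Rightarrow> ((nat \<times> bool) list \<Rightarrow> nat) \<Rightarrow> bool" where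
  "valid_strategy n \<sigma> \<longleftrightarrow>
     (\<forall>h. distinct (map fst h) \<and> set (map fst h) \<subseteq> {1..n} \<and> length h < n
          \<longrightarrow> \<sigma> h \<in> {1..n} - set (map fst h))"

text \<open>Execution of an adaptive strategy on outcome X (fuel bounds number of steps;
n steps always suffice for valid strategies).\<close>
primrec strat_run ::
  "nat \<Rightarrow> nat \<Rightarrow> (nat \<Rightarrow> nat) \<Rightarrow> ((nat \<times> bool) list \<Rightarrow> nat) \<Rightarrow> nat set \<Rightarrow> nat
     \<Rightarrow> (nat \<times> bool) list \<Rightarrow> (nat \<times> bool) list" where
  "strat_run n B t \<sigma> X 0 h = h"
| "strat_run n B t \<sigma> X (Suc k) h =
     (if determined n B t (set (map fst h)) X then h
      else strat_run n B t \<sigma> X k (h @ [(\<sigma> h, \<sigma> h \<in> X)]))"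

definition strategy_outcome ::
  "nat \<Rightarrow> nat \<Rightarrow> (nat \<Rightarrow> nat) \<Rightarrow> ((nat \<times> bool) list \<Rightarrow> nat) \<Rightarrow> nat set \<Rightarrow> (nat \<times> bool) list" where
  "strategy_outcome n B t \<sigma> X = strat_run n B t \<sigma> X n []"

text \<open>RoundRobin(ALG_1, ALG_2; 1, 1). Ties in the argmin are broken by an arbitrary
rule tb (tb h = True means choose ALG_1), which may depend on the history.\<close>
primrec rr_run ::
  "nat \<Rightarrow> nat \<Rightarrow> (nat \<Rightarrow> nat) \<Rightarrow> (nat \<Rightarrow> real) \<Rightarrow> nat list \<Rightarrow> nat list
     \<Rightarrow> ((nat \<times> bool) list \<Rightarrow> bool) \<Rightarrow> nat set \<Rightarrow> nat \<Rightarrow> real \<Rightarrow> real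
     \<Rightarrow> (nat \<times> bool) list \<Rightarrow> (nat \<times> bool) list" where
  "rr_run n B t c o1 o2 tb X 0 C1 C2 h = h"
| "rr_run n B t c o1 o2 tb X (Suc k) C1 C2 h =
     (if determined n B t (set (map fst h)) X then h
      else
        (let T = set (map fst h);
             j1 = hd (filter (\<lambda>j. j \<notin> T) o1);
             j2 = hd (filter (\<lambda>j. j \<notin> T) o2);
             v1 = (C1 + c j1);
             v2 = (C2 + c j2)
         in if v1 < v2 \<or> (v1 = v2 \<and> tb h)
            then rr_run n B t c o1 o2 tb X k (C1 + c j1) C2 (h @ [(j1, j1 \<in> X)])
            else rr_run n B t c o1 o2 tb X k C1 (C2 + c j2) (h @ [(j2, j2 \<in> X)])))"

definition two_rr_outcome ::
  "nat \<Rightarrow> nat \<Rightarrow> (nat \<Rightarrow> nat) \<Rightarrow> (nat \<Rightarrow> real) \<Rightarrow> nat list \<Rightarrow> nat list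
     \<Rightarrow> ((nat \<times> bool) list \<Rightarrow> bool) \<Rightarrow> nat set \<Rightarrow> (nat \<times> bool) list" where
  "two_rr_outcome n B t c o1 o2 tb X = rr_run n B t c o1 o2 tb X n 0 0 []"

definition is_order :: "nat \<Rightarrow> nat list \<Rightarrow> bool" where
  "is_order n os \<longleftrightarrow> distinct os \<and> set os = {1..n}"

end

theory Submission
  imports Defs
begin

(*
  Let i be the score of the outcome x. The score is certified exactly when at least t_i
  successes and at least n + 1 - t_(i+1) failures have been observed. Let P_succ be the shortest
  prefix of ALG_succ containing t_i successes and P_fail the shortest prefix of ALG_fail containing
  n + 1 - t_(i+1) failures. As long as the score is open, one of them still has an untested
  element, so the smaller of the two round-robin candidates is at most c(P_fail) + c(P_succ);
  hence 2RR pays at most 2 (c(P_fail) + c(P_succ)).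

  If the decision to conduct test j never depends on x_j, as for every adaptive strategy, the
  expected cost of the conducted tests equals the expectation of the sum of c_j / p_j over the
  conducted successful tests. For P_succ, whose membership of j can only grow when x_j turns
  to 1, this holds as an inequality. The successful tests in P_succ are the t_i ones of smallest
  c_j / p_j, while OPT must observe t_i successes, so E[c(P_succ)] <= E[OPT]; complementing the
  outcomes gives E[c(P_fail)] <= E[OPT]. Hence 2RR is even a 4-approximation.
*)

section \<open>Test orders and their prefixes\<close>

definition next_test :: "'a list \<Rightarrow> 'a set \<Rightarrow> 'a" where
  "next_test os T = hd (filter (\<lambda>j. j \<notin> T) os)"

definition done_prefix :: "'a list \<Rightarrow> 'a set \<Rightarrow> 'a set" where
  "done_prefix os T = set (takeWhile (\<lambda>j. j \<in> T) os)"

definition prefix_closed :: "'a list \<Rightarrow> 'a set \<Rightarrow> bool" where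
  "prefix_closed os S \<longleftrightarrow> (\<forall>k < length os. os ! k \<in> S \<longrightarrow> set (take k os) \<subseteq> S)"

lemma split_at_next_test:
  assumes "\<not> set os \<subseteq> T"
  obtains rest where "os = takeWhile (\<lambda>j. j \<in> T) os @ next_test os T # rest"
    and "next_test os T \<notin> T"
proof -
  obtain d rest where d: "dropWhile (\<lambda>j. j \<in> T) os = d # rest"
    using assms by (cases "dropWhile (\<lambda>j. j \<in> T) os") auto
  then have os: "os = takeWhile (\<lambda>j. j \<in> T) os @ d # rest" and "d \<notin> T"
    by (auto simp: dropWhile_eq_Cons_conv)
  moreover have "filter (\<lambda>j. j \<notin> T) (takeWhile (\<lambda>j. j \<in> T) os) = []"
    by (auto simp: filter_empty_conv dest: set_takeWhileD)
  then have "next_test os T = d"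
    unfolding next_test_def using \<open>d \<notin> T\<close> by (subst os) simp
  ultimately show thesis using that by simp
qed

lemma done_prefix_subset: "done_prefix os T \<subseteq> T"
  unfolding done_prefix_def by (auto dest: set_takeWhileD)

lemma done_prefix_mono: "T \<subseteq> T' \<Longrightarrow> done_prefix os T \<subseteq> done_prefix os T'"
  unfolding done_prefix_def by (induction os) auto

lemma done_prefix_subset_set: "done_prefix os T \<subseteq> set os"
  unfolding done_prefix_def by (auto dest: set_takeWhileD)

lemma finite_done_prefix: "finite (done_prefix os T)"
  unfolding done_prefix_def by (rule finite_set)

lemma next_test_untested:
  assumes "\<not> set os \<subseteq> T"
  shows "next_test os T \<in> set os" "next_test os T \<notin> T"
proof -
  obtain rest where "os = takeWhile (\<lambda>j. j \<in> T) os @ next_test os T # rest" "next_test os T \<notin> T"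
    using split_at_next_test[OF assms] by blast
  then show "next_test os T \<in> set os" "next_test os T \<notin> T"
    by (metis in_set_conv_decomp, blast)
qed

lemma insert_next_test_subset_done_prefix:
  assumes "\<not> set os \<subseteq> T"
  shows "insert (next_test os T) (done_prefix os T) \<subseteq> done_prefix os (insert (next_test os T) T)"
proof -
  obtain rest where os: "os = takeWhile (\<lambda>j. j \<in> T) os @ next_test os T # rest"
    using split_at_next_test[OF assms] by blast
  have "takeWhile (\<lambda>j. j \<in> insert (next_test os T) T) os
      = takeWhile (\<lambda>j. j \<in> T) os @ next_test os T # takeWhile (\<lambda>j. j \<in> insert (next_test os T) T) rest"
    by (subst os, subst takeWhile_append2) (auto dest: set_takeWhileD)
  then show ?thesis
    unfolding done_prefix_def by auto
qed

lemma insert_next_test_subset_prefix_closed: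
  assumes closed: "prefix_closed os S" and y: "y \<in> S" "y \<in> set os" "y \<notin> T"
  shows "insert (next_test os T) (done_prefix os T) \<subseteq> S"
proof -
  have untested: "\<not> set os \<subseteq> T" using y by blast
  define P where "P = takeWhile (\<lambda>j. j \<in> T) os"
  obtain rest where os: "os = P @ next_test os T # rest"
    using split_at_next_test[OF untested] unfolding P_def by blast
  obtain k where k: "k < length os" "os ! k = y"
    using y by (auto simp: in_set_conv_nth)
  have "\<not> k < length P"
  proof
    assume "k < length P"
    then have "y \<in> set P" using k os by (metis nth_append nth_mem)
    then show False using y unfolding P_def by (auto dest: set_takeWhileD)
  qed
  then have "set (take (Suc (length P)) os) \<subseteq> insert (os ! k) (set (take k os))"
  proof (cases "k = length P")
    case True
    then show ?thesis using k by (simp add: take_Suc_conv_app_nth)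
  next
    case False
    then have "Suc (length P) \<le> k" using \<open>\<not> k < length P\<close> by simp
    then show ?thesis by (meson set_take_subset_set_take subset_insertI2)
  qed
  also have "\<dots> \<subseteq> S"
    using closed k y unfolding prefix_closed_def by auto
  finally show ?thesis
    by (subst (asm) os) (simp add: done_prefix_def P_def[symmetric])
qed

lemma prefix_closed_sorted_le:
  fixes w :: "'a \<Rightarrow> 'b::linorder"
  assumes "prefix_closed os S" "sorted (map w os)"
    and "f \<in> S" "f \<in> set os" "h \<in> set os" "h \<notin> S"
  shows "w f \<le> w h"
proof -
  obtain i k where ik: "i < length os" "os ! i = f" "k < length os" "os ! k = h"
    using assms by (auto simp: in_set_conv_nth)
  have "\<not> k < i"
  proof
    assume "k < i"
    then have "h \<in> set (take i os)" using ik by (auto simp: in_set_conv_nth)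
    then show False using assms ik unfolding prefix_closed_def by auto
  qed
  then show ?thesis
    using sorted_nth_mono[OF assms(2), of i k] ik by simp
qed

lemma sum_insert_next_test:
  assumes "\<not> set os \<subseteq> T"
  shows "sum c (insert (next_test os T) (done_prefix os T)) = c (next_test os T) + sum c (done_prefix os T)"
proof (rule sum.insert[OF finite_done_prefix])
  show "next_test os T \<notin> done_prefix os T"
    using next_test_untested(2)[OF assms] done_prefix_subset[of os T] by blast
qed

lemma sum_done_prefix_mono:
  fixes c :: "'a \<Rightarrow> real"
  assumes "\<forall>j\<in>set os. 0 \<le> c j" "T \<subseteq> T'"
  shows "sum c (done_prefix os T) \<le> sum c (done_prefix os T')"
  using done_prefix_mono[OF assms(2)] done_prefix_subset_set[of os T'] assms(1)
  by (intro sum_mono2 finite_done_prefix) auto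

lemma counter_step_le_done_prefix:
  fixes c :: "'a \<Rightarrow> real"
  assumes c: "\<forall>j\<in>set os. 0 \<le> c j" and C: "C \<le> sum c (done_prefix os T)"
    and untested: "\<not> set os \<subseteq> T"
  shows "C + c (next_test os T) \<le> sum c (done_prefix os (insert (next_test os T) T))"
proof -
  have "sum c (insert (next_test os T) (done_prefix os T))
      \<le> sum c (done_prefix os (insert (next_test os T) T))"
    using insert_next_test_subset_done_prefix[OF untested]
      done_prefix_subset_set[of os "insert (next_test os T) T"] c
    by (intro sum_mono2 finite_done_prefix) auto
  then show ?thesis
    using C sum_insert_next_test[OF untested, of c] by simp
qed

lemma counter_step_le_prefix_closed:
  fixes c :: "'a \<Rightarrow> real"
  assumes c: "\<forall>j\<in>set os. 0 \<le> c j" and C: "C \<le> sum c (done_prefix os T)"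
    and S: "prefix_closed os S" "S \<subseteq> set os" and y: "y \<in> S" "y \<notin> T"
  shows "C + c (next_test os T) \<le> sum c S"
proof -
  have untested: "\<not> set os \<subseteq> T" using S y by blast
  have "finite S" using S(2) finite_subset by blast
  then have "sum c (insert (next_test os T) (done_prefix os T)) \<le> sum c S"
    using insert_next_test_subset_prefix_closed[OF S(1) y(1) _ y(2)] S(2) y c
    by (intro sum_mono2) auto
  then show ?thesis
    using C sum_insert_next_test[OF untested, of c] by simp
qed

section \<open>The shortest prefix hitting a set m times\<close>

text \<open>The elements of os preceded by fewer than m elements of Y: the shortest prefix of os
  containing m elements of Y, or all of os if Y has fewer than m elements in os.\<close>
definition hitting_prefix :: "'a list \<Rightarrow> nat \<Rightarrow> 'a set \<Rightarrow> 'a set" where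
  "hitting_prefix os m Y = {j \<in> set os. card (set (takeWhile (\<lambda>x. x \<noteq> j) os) \<inter> Y) < m}"

lemma hitting_prefix_subset: "hitting_prefix os m Y \<subseteq> set os"
  unfolding hitting_prefix_def by auto

lemma nth_in_hitting_prefix_iff:
  assumes "distinct os" "k < length os"
  shows "os ! k \<in> hitting_prefix os m Y \<longleftrightarrow> card (set (take k os) \<inter> Y) < m"
proof -
  have "takeWhile (\<lambda>x. x \<noteq> os ! k) os = take k os"
    using assms by (intro takeWhile_eq_take_P_nth) (auto simp: nth_eq_iff_index_eq)
  then show ?thesis
    using assms unfolding hitting_prefix_def by auto
qed

lemma prefix_closed_hitting_prefix:
  assumes "distinct os" "finite Y"
  shows "prefix_closed os (hitting_prefix os m Y)"
  unfolding prefix_closed_def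
proof (intro allI impI subsetI)
  fix k x assume k: "k < length os" "os ! k \<in> hitting_prefix os m Y" and "x \<in> set (take k os)"
  then obtain i where i: "i < k" "x = os ! i"
    by (auto simp: in_set_conv_nth)
  have "card (set (take i os) \<inter> Y) \<le> card (set (take k os) \<inter> Y)"
    using assms i set_take_subset_set_take[of i k os] by (intro card_mono) auto
  then show "x \<in> hitting_prefix os m Y"
    using i k nth_in_hitting_prefix_iff[OF assms(1)] by fastforce
qed

lemma card_take_inter_hitting_prefix:
  assumes "distinct os" "k \<le> length os"
  shows "card (set (take k os) \<inter> Y \<inter> hitting_prefix os m Y) = min (card (set (take k os) \<inter> Y)) m"
  using assms(2)
proof (induction k)
  case 0
  then show ?case by simp
next
  case (Suc k)
  let ?H = "hitting_prefix os m Y"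
  have k: "k < length os" using Suc.prems by simp
  have take_Suc: "set (take (Suc k) os) = insert (os ! k) (set (take k os))"
    using k by (simp add: take_Suc_conv_app_nth)
  have new: "os ! k \<notin> set (take k os)"
    using assms(1) k by (simp add: nth_eq_iff_index_eq in_set_conv_nth)
  have IH: "card (set (take k os) \<inter> Y \<inter> ?H) = min (card (set (take k os) \<inter> Y)) m"
    using Suc k by simp
  have mem: "os ! k \<in> ?H \<longleftrightarrow> card (set (take k os) \<inter> Y) < m"
    using nth_in_hitting_prefix_iff[OF assms(1) k] .
  show ?case
  proof (cases "os ! k \<in> Y")
    case False
    then have "set (take (Suc k) os) \<inter> Y = set (take k os) \<inter> Y" using take_Suc by auto
    then show ?thesis using IH by simp
  next
    case True
    then have Y: "set (take (Suc k) os) \<inter> Y = insert (os ! k) (set (take k os) \<inter> Y)"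
      using take_Suc by auto
    have "set (take (Suc k) os) \<inter> Y \<inter> ?H
        = (if os ! k \<in> ?H then insert (os ! k) (set (take k os) \<inter> Y \<inter> ?H) else set (take k os) \<inter> Y \<inter> ?H)"
      unfolding Y by auto
    then show ?thesis
      unfolding Y using IH mem new by (simp add: card_insert_if)
  qed
qed

lemma card_inter_hitting_prefix:
  assumes "distinct os" "Y \<subseteq> set os" "m \<le> card Y"
  shows "card (Y \<inter> hitting_prefix os m Y) = m"
proof -
  have "set (take (length os) os) \<inter> Y = Y" using assms(2) by auto
  then show ?thesis
    using card_take_inter_hitting_prefix[OF assms(1) order_refl, of Y m] assms(3) by (simp add: min_def)
qed

lemma hitting_prefix_insert:
  assumes "j \<notin> Y" "m \<le> m'" "j \<in> hitting_prefix os m Y"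
  shows "j \<in> hitting_prefix os m' (insert j Y)"
proof -
  have "set (takeWhile (\<lambda>x. x \<noteq> j) os) \<inter> insert j Y = set (takeWhile (\<lambda>x. x \<noteq> j) os) \<inter> Y"
    by (auto dest: set_takeWhileD)
  then show ?thesis
    using assms unfolding hitting_prefix_def by auto
qed

lemma sum_le_sum_exchange:
  fixes w :: "'a \<Rightarrow> 'b::ordered_comm_monoid_add"
  assumes fin: "finite L" "finite A" and card_le: "card L \<le> card A"
    and exchange: "\<And>f h. f \<in> L - A \<Longrightarrow> h \<in> A - L \<Longrightarrow> w f \<le> w h"
    and nonneg: "\<And>h. h \<in> A - L \<Longrightarrow> 0 \<le> w h"
  shows "sum w L \<le> sum w A"
proof -
  have "card (L - A) = card L - card (L \<inter> A)" "card (A - L) = card A - card (L \<inter> A)"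
    using fin by (simp_all add: card_Diff_subset_Int inf_commute)
  then have "card (L - A) \<le> card (A - L)"
    using diff_le_mono[OF card_le, of "card (L \<inter> A)"] by simp
  then obtain g where g: "g ` (L - A) \<subseteq> A - L" "inj_on g (L - A)"
    using card_le_inj[of "L - A" "A - L"] fin by auto
  have "sum w (L - A) \<le> sum (w \<circ> g) (L - A)"
    using g exchange by (intro sum_mono) auto
  also have "\<dots> = sum w (g ` (L - A))"
    using g by (simp add: sum.reindex)
  also have "\<dots> \<le> sum w (A - L)"
    using g fin nonneg by (intro sum_mono2) auto
  finally have "sum w (L - A) \<le> sum w (A - L)" .
  then show ?thesis
    using fin by (metis add_left_mono Int_commute sum.Int_Diff)
qed

lemma sum_hitting_prefix_le:
  fixes w :: "'a \<Rightarrow> real"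
  assumes os: "distinct os" "sorted (map w os)"
    and Y: "finite Y" "Y \<subseteq> set os" and w: "\<forall>j\<in>Y. 0 \<le> w j"
    and A: "A \<subseteq> Y" "m \<le> card A"
  shows "sum w (hitting_prefix os m Y \<inter> Y) \<le> sum w A"
proof (rule sum_le_sum_exchange)
  have "m \<le> card Y" using A Y card_mono[OF Y(1) A(1)] by linarith
  then show "card (hitting_prefix os m Y \<inter> Y) \<le> card A"
    using card_inter_hitting_prefix[OF os(1) Y(2)] A by (simp add: inf_commute)
  show "w f \<le> w h" if "f \<in> hitting_prefix os m Y \<inter> Y - A" "h \<in> A - hitting_prefix os m Y \<inter> Y" for f h
    using that A Y prefix_closed_sorted_le[OF prefix_closed_hitting_prefix[OF os(1) Y(1)] os(2)]
      hitting_prefix_subset by blast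
qed (use Y A w finite_subset in auto)

section \<open>Expectations under independent outcomes\<close>

lemma prob_nonneg:
  assumes "\<forall>j\<in>{1..n}. 0 < q j \<and> q j < 1" "Y \<subseteq> {1..n}"
  shows "0 \<le> prob n q Y"
proof -
  have "0 \<le> (\<Prod>j\<in>Y. q j)" using assms by (intro prod_nonneg) (auto simp: less_imp_le)
  moreover have "0 \<le> (\<Prod>j\<in>{1..n} - Y. 1 - q j)" using assms by (intro prod_nonneg) (auto simp: less_imp_le)
  ultimately show ?thesis unfolding prob_def by simp
qed

lemma prob_insert:
  assumes "Y \<subseteq> {1..n}" "j \<in> {1..n}" "j \<notin> Y"
  shows "prob n q (insert j Y) * (1 - q j) = prob n q Y * q j"
proof -
  have fin: "finite Y" using assms(1) by (rule finite_subset) simp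
  have p1: "(\<Prod>i\<in>insert j Y. q i) = q j * (\<Prod>i\<in>Y. q i)" using fin assms(3) by simp
  have e: "{1..n} - Y = insert j ({1..n} - insert j Y)" using assms by auto
  have p2: "(\<Prod>i\<in>{1..n} - Y. 1 - q i) = (1 - q j) * (\<Prod>i\<in>{1..n} - insert j Y. 1 - q i)"
    unfolding e by (subst prod.insert) auto
  show ?thesis unfolding prob_def p1 p2 by (simp add: algebra_simps)
qed

lemma sum_Pow_complement:
  "(\<Sum>X\<in>Pow {1..n}. prob n p X * F X)
     = (\<Sum>Y\<in>Pow {1..n}. prob n (\<lambda>j. 1 - p j) Y * F ({1..n} - Y))"
proof (rule sum.reindex_bij_witness[where i = "\<lambda>Y. {1..n} - Y" and j = "\<lambda>X. {1..n} - X"])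
  fix X assume "X \<in> Pow {1..n}"
  then have "{1..n} - ({1..n} - X) = X" by auto
  then show "prob n (\<lambda>j. 1 - p j) ({1..n} - X) * F ({1..n} - ({1..n} - X)) = prob n p X * F X"
    unfolding prob_def by (simp add: mult.commute)
qed auto

lemma sum_Pow_insert_split:
  assumes "j \<in> N" "finite N"
  shows "(\<Sum>Y\<in>Pow N. f Y) = (\<Sum>Y\<in>Pow (N - {j}). f Y + f (insert j Y))"
proof -
  have N: "N = insert j (N - {j})" using assms by auto
  have "(\<Sum>Y\<in>Pow N. f Y) = (\<Sum>Y\<in>Pow (N - {j}) \<union> insert j ` Pow (N - {j}). f Y)"
    by (subst N) (simp only: Pow_insert)
  also have "\<dots> = (\<Sum>Y\<in>Pow (N - {j}). f Y) + (\<Sum>Y\<in>insert j ` Pow (N - {j}). f Y)"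
    by (rule sum.union_disjoint) (use assms in auto)
  also have "(\<Sum>Y\<in>insert j ` Pow (N - {j}). f Y) = (\<Sum>Y\<in>Pow (N - {j}). f (insert j Y))"
    by (subst sum.reindex) (auto intro!: inj_onI)
  finally show ?thesis by (simp add: sum.distrib)
qed

lemma expectation_if_mem:
  assumes j: "j \<in> {1..n}"
  shows "(\<Sum>Y\<in>Pow {1..n}. prob n q Y * (if j \<in> Y then f Y else 0))
       = q j * (\<Sum>Y\<in>Pow {1..n}. prob n q Y * f (insert j Y))"
proof -
  note split = sum_Pow_insert_split[OF j finite_atLeastAtMost]
  have prob_split: "prob n q (insert j Y) = q j * (prob n q Y + prob n q (insert j Y))"
    if "Y \<in> Pow ({1..n} - {j})" for Y
  proof -
    have "Y \<subseteq> {1..n}" "j \<notin> Y" using that by auto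
    from prob_insert[OF this(1) j this(2)] show ?thesis by (simp add: algebra_simps)
  qed
  have "(\<Sum>Y\<in>Pow {1..n}. prob n q Y * (if j \<in> Y then f Y else 0))
      = (\<Sum>Y\<in>Pow ({1..n} - {j}). prob n q (insert j Y) * f (insert j Y))"
    unfolding split by (intro sum.cong refl) auto
  also have "\<dots> = q j * (\<Sum>Y\<in>Pow ({1..n} - {j}). prob n q Y * f (insert j Y)
                                                + prob n q (insert j Y) * f (insert j Y))"
    unfolding sum_distrib_left by (intro sum.cong refl, subst prob_split) (auto simp: algebra_simps)
  also have "\<dots> = q j * (\<Sum>Y\<in>Pow {1..n}. prob n q Y * f (insert j Y))"
    unfolding split by simp
  finally show ?thesis .
qed

lemma expected_sum_eq:
  assumes M: "\<And>Y. Y \<subseteq> {1..n} \<Longrightarrow> M Y \<subseteq> {1..n}"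
  shows "(\<Sum>Y\<in>Pow {1..n}. prob n q Y * sum c (M Y))
       = (\<Sum>j\<in>{1..n}. c j * (\<Sum>Y\<in>Pow {1..n}. prob n q Y * of_bool (j \<in> M Y)))"
proof -
  define ind where "ind j Y = (of_bool (j \<in> M Y) :: real)" for j Y
  have "sum c (M Y) = (\<Sum>j\<in>{1..n}. c j * ind j Y)" if "Y \<subseteq> {1..n}" for Y
  proof -
    have "sum c (M Y) = sum c ({1..n} \<inter> M Y)" using M[OF that] by (simp add: Int_absorb1)
    also have "\<dots> = (\<Sum>j\<in>{1..n}. if j \<in> M Y then c j else 0)" by (simp add: sum.inter_restrict)
    also have "\<dots> = (\<Sum>j\<in>{1..n}. c j * ind j Y)" unfolding ind_def by (intro sum.cong) auto
    finally show ?thesis .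
  qed
  then have "(\<Sum>Y\<in>Pow {1..n}. prob n q Y * sum c (M Y))
      = (\<Sum>Y\<in>Pow {1..n}. \<Sum>j\<in>{1..n}. c j * (prob n q Y * ind j Y))"
    by (intro sum.cong refl) (auto simp: sum_distrib_left mult.left_commute)
  also have "\<dots> = (\<Sum>j\<in>{1..n}. \<Sum>Y\<in>Pow {1..n}. c j * (prob n q Y * ind j Y))"
    by (rule sum.swap)
  finally show ?thesis
    unfolding ind_def by (simp only: sum_distrib_left)
qed

lemma expected_weighted_sum_eq:
  assumes M: "\<And>Y. Y \<subseteq> {1..n} \<Longrightarrow> M Y \<subseteq> {1..n}" and q: "\<forall>j\<in>{1..n}. q j \<noteq> 0"
  shows "(\<Sum>Y\<in>Pow {1..n}. prob n q Y * (\<Sum>j\<in>M Y \<inter> Y. c j / q j))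
       = (\<Sum>j\<in>{1..n}. c j * (\<Sum>Y\<in>Pow {1..n}. prob n q Y * of_bool (j \<in> M (insert j Y))))"
proof -
  define S where "S j = (\<Sum>Y\<in>Pow {1..n}. prob n q Y * of_bool (j \<in> M (insert j Y)))" for j
  have S: "(\<Sum>Y\<in>Pow {1..n}. prob n q Y * of_bool (j \<in> M Y \<inter> Y)) = q j * S j" if "j \<in> {1..n}" for j
  proof -
    have "of_bool (j \<in> M Y \<inter> Y) = (if j \<in> Y then of_bool (j \<in> M Y) else (0::real))" for Y
      by simp
    then show ?thesis
      unfolding S_def using expectation_if_mem[OF that, of q "\<lambda>Y. of_bool (j \<in> M Y)"] by simp
  qed
  have "(\<Sum>Y\<in>Pow {1..n}. prob n q Y * (\<Sum>j\<in>M Y \<inter> Y. c j / q j))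
      = (\<Sum>j\<in>{1..n}. c j / q j * (\<Sum>Y\<in>Pow {1..n}. prob n q Y * of_bool (j \<in> M Y \<inter> Y)))"
    using M by (intro expected_sum_eq[where M = "\<lambda>Y. M Y \<inter> Y" and c = "\<lambda>j. c j / q j"]) auto
  also have "\<dots> = (\<Sum>j\<in>{1..n}. c j * S j)"
  proof (intro sum.cong refl)
    fix j assume "j \<in> {1..n}"
    then show "c j / q j * (\<Sum>Y\<in>Pow {1..n}. prob n q Y * of_bool (j \<in> M Y \<inter> Y)) = c j * S j"
      using q by (subst S) auto
  qed
  finally show ?thesis
    unfolding S_def .
qed

lemma expected_sum_le_weighted:
  assumes q: "\<forall>j\<in>{1..n}. 0 < q j \<and> q j < 1" and c: "\<forall>j\<in>{1..n}. 0 \<le> c j"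
    and M: "\<And>Y. Y \<subseteq> {1..n} \<Longrightarrow> M Y \<subseteq> {1..n}"
    and M_mono: "\<And>Y j. Y \<subseteq> {1..n} \<Longrightarrow> j \<in> {1..n} \<Longrightarrow> j \<in> M Y \<Longrightarrow> j \<in> M (insert j Y)"
  shows "(\<Sum>Y\<in>Pow {1..n}. prob n q Y * sum c (M Y))
       \<le> (\<Sum>Y\<in>Pow {1..n}. prob n q Y * (\<Sum>j\<in>M Y \<inter> Y. c j / q j))"
proof -
  have q_nonzero: "\<forall>j\<in>{1..n}. q j \<noteq> 0" using q by auto
  have inner: "(\<Sum>Y\<in>Pow {1..n}. prob n q Y * of_bool (j \<in> M Y))
      \<le> (\<Sum>Y\<in>Pow {1..n}. prob n q Y * of_bool (j \<in> M (insert j Y)))" if j: "j \<in> {1..n}" for j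
  proof (rule sum_mono)
    fix Y assume Y: "Y \<in> Pow {1..n}"
    have "0 \<le> prob n q Y" using prob_nonneg[OF q] Y by simp
    moreover have "j \<in> M (insert j Y)" if "j \<in> M Y" using M_mono[of Y j] Y j that by simp
    ultimately show "prob n q Y * of_bool (j \<in> M Y) \<le> prob n q Y * of_bool (j \<in> M (insert j Y))"
      by (cases "j \<in> M Y") simp_all
  qed
  have "(\<Sum>Y\<in>Pow {1..n}. prob n q Y * sum c (M Y))
      = (\<Sum>j\<in>{1..n}. c j * (\<Sum>Y\<in>Pow {1..n}. prob n q Y * of_bool (j \<in> M Y)))"
    by (rule expected_sum_eq[OF M])
  also have "\<dots> \<le> (\<Sum>j\<in>{1..n}. c j * (\<Sum>Y\<in>Pow {1..n}. prob n q Y * of_bool (j \<in> M (insert j Y))))"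
    by (rule sum_mono, rule mult_left_mono) (use c inner in auto)
  also have "\<dots> = (\<Sum>Y\<in>Pow {1..n}. prob n q Y * (\<Sum>j\<in>M Y \<inter> Y. c j / q j))"
    by (rule expected_weighted_sum_eq[OF M q_nonzero, symmetric])
  finally show ?thesis .
qed

lemma expected_sum_eq_weighted:
  assumes q: "\<forall>j\<in>{1..n}. q j \<noteq> 0"
    and M: "\<And>Y. Y \<subseteq> {1..n} \<Longrightarrow> M Y \<subseteq> {1..n}"
    and M_indep: "\<And>Y j. Y \<subseteq> {1..n} \<Longrightarrow> j \<in> {1..n} \<Longrightarrow> j \<in> M Y \<longleftrightarrow> j \<in> M (insert j Y)"
  shows "(\<Sum>Y\<in>Pow {1..n}. prob n q Y * sum c (M Y))
       = (\<Sum>Y\<in>Pow {1..n}. prob n q Y * (\<Sum>j\<in>M Y \<inter> Y. c j / q j))"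
proof -
  have same: "(\<Sum>Y\<in>Pow {1..n}. prob n q Y * of_bool (j \<in> M Y))
      = (\<Sum>Y\<in>Pow {1..n}. prob n q Y * of_bool (j \<in> M (insert j Y)))" if j: "j \<in> {1..n}" for j
  proof (rule sum.cong[OF refl])
    fix Y assume "Y \<in> Pow {1..n}"
    then show "prob n q Y * of_bool (j \<in> M Y) = prob n q Y * of_bool (j \<in> M (insert j Y))"
      using M_indep[of Y j] j by simp
  qed
  have "(\<Sum>Y\<in>Pow {1..n}. prob n q Y * sum c (M Y))
      = (\<Sum>j\<in>{1..n}. c j * (\<Sum>Y\<in>Pow {1..n}. prob n q Y * of_bool (j \<in> M Y)))"
    by (rule expected_sum_eq[OF M])
  also have "\<dots> = (\<Sum>j\<in>{1..n}. c j * (\<Sum>Y\<in>Pow {1..n}. prob n q Y * of_bool (j \<in> M (insert j Y))))"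
    by (rule sum.cong[OF refl]) (simp only: same)
  also have "\<dots> = (\<Sum>Y\<in>Pow {1..n}. prob n q Y * (\<Sum>j\<in>M Y \<inter> Y. c j / q j))"
    by (rule expected_weighted_sum_eq[OF M q, symmetric])
  finally show ?thesis .
qed

lemma expected_hitting_prefix_cost_le:
  fixes q c :: "nat \<Rightarrow> real" and m :: "nat set \<Rightarrow> nat" and T :: "nat set \<Rightarrow> nat set"
  assumes q: "\<forall>j\<in>{1..n}. 0 < q j \<and> q j < 1" and c: "\<forall>j\<in>{1..n}. 0 \<le> c j"
    and os: "is_order n os" "sorted (map (\<lambda>j. c j / q j) os)"
    and m_mono: "\<And>Y j. Y \<subseteq> {1..n} \<Longrightarrow> j \<in> {1..n} \<Longrightarrow> m Y \<le> m (insert j Y)"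
    and T: "\<And>Y. Y \<subseteq> {1..n} \<Longrightarrow> T Y \<subseteq> {1..n}"
    and T_hits: "\<And>Y. Y \<subseteq> {1..n} \<Longrightarrow> m Y \<le> card (T Y \<inter> Y)"
    and T_indep: "\<And>Y j. Y \<subseteq> {1..n} \<Longrightarrow> j \<in> {1..n} \<Longrightarrow> j \<in> T Y \<longleftrightarrow> j \<in> T (insert j Y)"
  shows "(\<Sum>Y\<in>Pow {1..n}. prob n q Y * sum c (hitting_prefix os (m Y) Y))
       \<le> (\<Sum>Y\<in>Pow {1..n}. prob n q Y * sum c (T Y))"
proof -
  have os': "distinct os" "set os = {1..n}" using os(1) unfolding is_order_def by auto
  let ?H = "\<lambda>Y. hitting_prefix os (m Y) Y"
  have "(\<Sum>Y\<in>Pow {1..n}. prob n q Y * sum c (?H Y))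
      \<le> (\<Sum>Y\<in>Pow {1..n}. prob n q Y * (\<Sum>j\<in>?H Y \<inter> Y. c j / q j))"
  proof (rule expected_sum_le_weighted[OF q c])
    show "?H Y \<subseteq> {1..n}" for Y
      using hitting_prefix_subset[of os "m Y" Y] os' by simp
    show "j \<in> ?H (insert j Y)" if "Y \<subseteq> {1..n}" "j \<in> {1..n}" "j \<in> ?H Y" for Y j
      using that hitting_prefix_insert[OF _ m_mono[OF that(1,2)]] by (cases "j \<in> Y") (auto simp: insert_absorb)
  qed
  also have "\<dots> \<le> (\<Sum>Y\<in>Pow {1..n}. prob n q Y * (\<Sum>j\<in>T Y \<inter> Y. c j / q j))"
  proof (rule sum_mono, rule mult_left_mono)
    fix Y assume "Y \<in> Pow {1..n}"
    then have Y: "Y \<subseteq> {1..n}" by simp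
    then show "0 \<le> prob n q Y" by (rule prob_nonneg[OF q])
    show "(\<Sum>j\<in>?H Y \<inter> Y. c j / q j) \<le> (\<Sum>j\<in>T Y \<inter> Y. c j / q j)"
    proof (rule sum_hitting_prefix_le)
      show "\<forall>j\<in>Y. 0 \<le> c j / q j" using Y q c by (auto intro!: divide_nonneg_pos)
    qed (use os' os(2) Y T_hits[OF Y] finite_subset[OF Y] in auto)
  qed
  also have "\<dots> = (\<Sum>Y\<in>Pow {1..n}. prob n q Y * sum c (T Y))"
    by (rule expected_sum_eq_weighted[symmetric, OF _ T T_indep]) (use q in auto)
  finally show ?thesis .
qed

section \<open>Score thresholds\<close>

locale score_thresholds =
  fixes n B :: nat and t :: "nat \<Rightarrow> nat"
  assumes t_first: "t 1 = 0"
    and t_last: "t (B + 1) = n + 1"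
    and t_incr: "\<forall>i\<in>{1..B}. t i < t (i + 1)"
begin

lemma t_mono:
  assumes "1 \<le> i" "i \<le> i'" "i' \<le> B + 1"
  shows "t i \<le> t i'"
  using assms(2,3)
proof (induction i' rule: dec_induct)
  case (step m)
  then have "t m < t (m + 1)" using t_incr assms(1) by auto
  with step show ?case by simp
qed simp

lemma score_eqI:
  assumes "i \<in> {1..B}" "t i \<le> k" "k < t (i + 1)"
  shows "score B t k = i"
  unfolding score_def
proof (rule the_equality)
  show "i \<in> {1..B} \<and> t i \<le> k \<and> k \<le> t (i + 1) - 1" using assms by auto
next
  fix i' assume i': "i' \<in> {1..B} \<and> t i' \<le> k \<and> k \<le> t (i' + 1) - 1"
  then have "k < t (i' + 1)" using t_incr by fastforce
  show "i' = i"
  proof (rule ccontr)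
    assume "i' \<noteq> i"
    then consider "i' + 1 \<le> i" | "i + 1 \<le> i'" by linarith
    then show False
    proof cases
      case 1
      then have "t (i' + 1) \<le> t i" using i' assms by (intro t_mono) auto
      then show False using \<open>k < t (i' + 1)\<close> assms by linarith
    next
      case 2
      then have "t (i + 1) \<le> t i'" using i' assms by (intro t_mono) auto
      then show False using i' assms by linarith
    qed
  qed
qed

lemma score_bounds:
  assumes "k \<le> n"
  shows "score B t k \<in> {1..B}" "t (score B t k) \<le> k" "k < t (score B t k + 1)"
proof -
  define I where "I = {i \<in> {1..B}. t i \<le> k}"
  have "1 \<in> I" using t_first t_last unfolding I_def by (cases B) auto
  then have i: "Max I \<in> I" unfolding I_def by (intro Max_in) auto
  have "k < t (Max I + 1)"
  proof (cases "Max I = B")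
    case True
    then show ?thesis using t_last assms by simp
  next
    case False
    then have "Max I + 1 \<notin> I" using Max_ge[of I "Max I + 1"] unfolding I_def by fastforce
    then show ?thesis using i False unfolding I_def by auto
  qed
  then have "score B t k = Max I" using i unfolding I_def by (intro score_eqI) auto
  then show "score B t k \<in> {1..B}" "t (score B t k) \<le> k" "k < t (score B t k + 1)"
    using i \<open>k < t (Max I + 1)\<close> unfolding I_def by auto
qed

lemma score_eq_iff:
  assumes "k \<le> n" "k0 \<le> n"
  shows "score B t k = score B t k0 \<longleftrightarrow> t (score B t k0) \<le> k \<and> k < t (score B t k0 + 1)"
  using score_bounds[OF assms(1)] score_bounds[OF assms(2)] score_eqI by metis

lemma score_mono:
  assumes "k \<le> k'" "k' \<le> n"
  shows "score B t k \<le> score B t k'"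
proof (rule ccontr)
  have k: "k \<le> n" using assms by simp
  assume "\<not> ?thesis"
  then have "t (score B t k' + 1) \<le> t (score B t k)"
    using score_bounds(1)[OF k] score_bounds(1)[OF assms(2)] by (intro t_mono) auto
  then show False
    using score_bounds(2)[OF k] score_bounds(3)[OF assms(2)] assms(1) by linarith
qed

lemma t_score_mono:
  assumes "k \<le> k'" "k' \<le> n" "j \<le> 1"
  shows "t (score B t k + j) \<le> t (score B t k' + j)"
  using assms score_mono[OF assms(1,2)] score_bounds(1)[of k] score_bounds(1)[OF assms(2)]
  by (intro t_mono) auto

definition succ_needed :: "nat \<Rightarrow> nat" where
  "succ_needed k = t (score B t k)"

definition fail_needed :: "nat \<Rightarrow> nat" where
  "fail_needed k = n + 1 - t (score B t k + 1)"

lemma succ_needed_le: "k \<le> n \<Longrightarrow> succ_needed k \<le> k"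
  unfolding succ_needed_def using score_bounds by blast

lemma fail_needed_le: "k \<le> n \<Longrightarrow> fail_needed k \<le> n - k"
  unfolding fail_needed_def using score_bounds(3) by fastforce

lemma succ_needed_mono: "k \<le> k' \<Longrightarrow> k' \<le> n \<Longrightarrow> succ_needed k \<le> succ_needed k'"
  unfolding succ_needed_def using t_score_mono[of k k' 0] by simp

lemma fail_needed_antimono: "k \<le> k' \<Longrightarrow> k' \<le> n \<Longrightarrow> fail_needed k' \<le> fail_needed k"
  unfolding fail_needed_def using t_score_mono[of k k' 1] by simp

lemma determined_iff_extreme_completions:
  assumes T: "T \<subseteq> {1..n}" and X: "X \<subseteq> {1..n}"
  shows "determined n B t T X \<longleftrightarrow>
           score B t (card (T \<inter> X)) = score B t (card X)
         \<and> score B t (card (X \<union> ({1..n} - T))) = score B t (card X)"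
proof
  assume "determined n B t T X"
  moreover have "T \<inter> X \<subseteq> {1..n}" "(T \<inter> X) \<inter> T = X \<inter> T"
    "X \<union> ({1..n} - T) \<subseteq> {1..n}" "(X \<union> ({1..n} - T)) \<inter> T = X \<inter> T"
    using X by auto
  ultimately show "score B t (card (T \<inter> X)) = score B t (card X)
      \<and> score B t (card (X \<union> ({1..n} - T))) = score B t (card X)"
    unfolding determined_def by metis
next
  assume extremes: "score B t (card (T \<inter> X)) = score B t (card X)
      \<and> score B t (card (X \<union> ({1..n} - T))) = score B t (card X)"
  show "determined n B t T X"
    unfolding determined_def
  proof (intro allI impI)
    fix X' assume X': "X' \<subseteq> {1..n}" "X' \<inter> T = X \<inter> T"
    have upper: "card (X \<union> ({1..n} - T)) \<le> n"
      using X card_mono[of "{1..n}"] by auto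
    have "card (T \<inter> X) \<le> card X'" "card X' \<le> card (X \<union> ({1..n} - T))"
      using X X' by (auto intro!: card_mono intro: finite_subset)
    then have "score B t (card (T \<inter> X)) \<le> score B t (card X')"
      "score B t (card X') \<le> score B t (card (X \<union> ({1..n} - T)))"
      using upper by (auto intro!: score_mono)
    then show "score B t (card X') = score B t (card X)"
      using extremes by simp
  qed
qed

lemma determined_iff_counts:
  assumes T: "T \<subseteq> {1..n}" and X: "X \<subseteq> {1..n}"
  shows "determined n B t T X \<longleftrightarrow>
           succ_needed (card X) \<le> card (T \<inter> X) \<and> fail_needed (card X) \<le> card (T - X)"
proof -
  define i where "i = score B t (card X)"
  have fin: "finite T" "finite X" using T X finite_subset by auto
  have "card ((X \<union> ({1..n} - T)) \<union> (T - X)) = card (X \<union> ({1..n} - T)) + card (T - X)"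
    using fin by (intro card_Un_disjoint) auto
  moreover have "(X \<union> ({1..n} - T)) \<union> (T - X) = {1..n}" using T X by auto
  ultimately have partition: "card (X \<union> ({1..n} - T)) + card (T - X) = n" by simp
  have X_le: "card X \<le> n" using X card_mono[of "{1..n}" X] by simp
  have "card (T \<inter> X) \<le> card X" "card X \<le> card (X \<union> ({1..n} - T))"
    using fin by (auto intro: card_mono)
  then have "score B t (card (T \<inter> X)) = i \<longleftrightarrow> t i \<le> card (T \<inter> X)"
    "score B t (card (X \<union> ({1..n} - T))) = i \<longleftrightarrow> card (X \<union> ({1..n} - T)) < t (i + 1)"
    using score_eq_iff[OF _ X_le] score_bounds[OF X_le] partition unfolding i_def by auto
  moreover have "card (X \<union> ({1..n} - T)) < t (i + 1) \<longleftrightarrow> n + 1 - t (i + 1) \<le> card (T - X)"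
    using partition by linarith
  ultimately show ?thesis
    unfolding determined_iff_extreme_completions[OF T X] succ_needed_def fail_needed_def i_def
    by simp
qed

end

section \<open>Adaptive strategies\<close>

lemma cost_eq_sum:
  assumes "distinct (map fst h)"
  shows "cost c h = sum c (set (map fst h))"
proof -
  have "cost c h = sum_list (map c (map fst h))"
    unfolding cost_def by (induction h) auto
  then show ?thesis
    using sum_list_distinct_conv_sum_set[OF assms, of c] by simp
qed

lemma cost_snoc: "cost c (h @ [(j, b)]) = cost c h + c j"
  unfolding cost_def by simp

lemma cost_nonneg:
  assumes "set (map fst h) \<subseteq> {1..n}" "\<forall>j\<in>{1..n}. 0 \<le> c j"
  shows "0 \<le> cost c h"
  using assms unfolding cost_def by (induction h) auto

lemma determined_cong:
  assumes "X \<subseteq> {1..n}" "X' \<subseteq> {1..n}" "X \<inter> T = X' \<inter> T"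
  shows "determined n B t T X \<longleftrightarrow> determined n B t T X'"
  using assms unfolding determined_def by metis

lemma determined_all_tested:
  assumes "X \<subseteq> {1..n}"
  shows "determined n B t {1..n} X"
  unfolding determined_def using assms by (metis Int_absorb2)

lemma strat_run_extends: "\<exists>h'. strat_run n B t \<sigma> X k h = h @ h'"
proof (induction k arbitrary: h)
  case (Suc k)
  then show ?case by (metis append.assoc strat_run.simps(2) append_Nil2)
qed simp

lemma strat_run_determined:
  assumes valid: "valid_strategy n \<sigma>" and X: "X \<subseteq> {1..n}"
    and h: "distinct (map fst h)" "set (map fst h) \<subseteq> {1..n}" "length h + k = n"
  shows "distinct (map fst (strat_run n B t \<sigma> X k h))
    \<and> set (map fst (strat_run n B t \<sigma> X k h)) \<subseteq> {1..n}
    \<and> determined n B t (set (map fst (strat_run n B t \<sigma> X k h))) X"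
  using h
proof (induction k arbitrary: h)
  case 0
  then have "card (set (map fst h)) = card {1..n}"
    using distinct_card[OF 0(1)] by simp
  then have "set (map fst h) = {1..n}"
    using 0(2) by (intro card_subset_eq) auto
  then show ?case using 0 determined_all_tested[OF X] by simp
next
  case (Suc k)
  show ?case
  proof (cases "determined n B t (set (map fst h)) X")
    case False
    then have "\<sigma> h \<in> {1..n} - set (map fst h)"
      using valid Suc.prems unfolding valid_strategy_def by auto
    then show ?thesis
      using Suc.IH[of "h @ [(\<sigma> h, \<sigma> h \<in> X)]"] Suc.prems False by simp
  qed (use Suc.prems in simp)
qed

lemma strat_run_tests_indep:
  assumes X: "X \<subseteq> {1..n}" and X': "X' \<subseteq> {1..n}" and XX': "X - {j} = X' - {j}"
    and h: "j \<notin> set (map fst h)"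
  shows "j \<in> set (map fst (strat_run n B t \<sigma> X k h)) \<longleftrightarrow> j \<in> set (map fst (strat_run n B t \<sigma> X' k h))"
  using h
proof (induction k arbitrary: h)
  case (Suc k)
  have "X \<inter> set (map fst h) = X' \<inter> set (map fst h)" using XX' Suc.prems by blast
  then have same_stop: "determined n B t (set (map fst h)) X \<longleftrightarrow> determined n B t (set (map fst h)) X'"
    by (rule determined_cong[OF X X'])
  show ?case
  proof (cases "determined n B t (set (map fst h)) X")
    case False
    show ?thesis
    proof (cases "\<sigma> h = j")
      case True
      have "j \<in> set (map fst (strat_run n B t \<sigma> Z k (h @ [(\<sigma> h, \<sigma> h \<in> Z)])))" for Z
        using strat_run_extends[of n B t \<sigma> Z k "h @ [(\<sigma> h, \<sigma> h \<in> Z)]"] True by auto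
      then show ?thesis
        using False same_stop by simp
    next
      case False
      then have "(\<sigma> h \<in> X) = (\<sigma> h \<in> X')" using XX' by blast
      then show ?thesis
        using \<open>\<not> determined n B t (set (map fst h)) X\<close> same_stop False
          Suc.IH[of "h @ [(\<sigma> h, \<sigma> h \<in> X)]"] Suc.prems by simp
    qed
  qed (use same_stop in simp)
qed simp

lemma strategy_outcome_determined:
  assumes "valid_strategy n \<sigma>" "X \<subseteq> {1..n}"
  shows "distinct (map fst (strategy_outcome n B t \<sigma> X))
    \<and> set (map fst (strategy_outcome n B t \<sigma> X)) \<subseteq> {1..n}
    \<and> determined n B t (set (map fst (strategy_outcome n B t \<sigma> X))) X"
  unfolding strategy_outcome_def using strat_run_determined[OF assms, of "[]"] by simp

lemma strategy_outcome_tests_indep: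
  assumes "X \<subseteq> {1..n}" "X' \<subseteq> {1..n}" "X - {j} = X' - {j}"
  shows "j \<in> set (map fst (strategy_outcome n B t \<sigma> X)) \<longleftrightarrow> j \<in> set (map fst (strategy_outcome n B t \<sigma> X'))"
  unfolding strategy_outcome_def using strat_run_tests_indep[OF assms, of "[]"] by simp

section \<open>Round robin\<close>

lemma rr_step_min_le:
  fixes c :: "nat \<Rightarrow> real"
  assumes o1: "set o1 = {1..n}" and o2: "set o2 = {1..n}" and c: "\<forall>j\<in>{1..n}. 0 \<le> c j"
    and S1: "prefix_closed o1 S1" "S1 \<subseteq> {1..n}" and S2: "prefix_closed o2 S2" "S2 \<subseteq> {1..n}"
    and certifies: "\<And>T. T \<subseteq> {1..n} \<Longrightarrow> S1 \<subseteq> T \<Longrightarrow> S2 \<subseteq> T \<Longrightarrow> determined n B t T X"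
    and T: "T \<subseteq> {1..n}" "\<not> determined n B t T X"
    and C1: "C1 \<le> sum c (done_prefix o1 T)" and C2: "C2 \<le> sum c (done_prefix o2 T)"
  shows "min (C1 + c (next_test o1 T)) (C2 + c (next_test o2 T)) \<le> sum c S1 + sum c S2"
proof -
  obtain y where y: "y \<in> S1 \<union> S2" "y \<notin> T"
    using certifies[OF T(1)] T(2) by blast
  have "0 \<le> sum c S1" "0 \<le> sum c S2"
    using S1 S2 c by (auto intro!: sum_nonneg)
  moreover have "C1 + c (next_test o1 T) \<le> sum c S1" if "y \<in> S1"
    using counter_step_le_prefix_closed[OF _ C1 S1(1) _ that y(2)] S1 o1 c by simp
  moreover have "C2 + c (next_test o2 T) \<le> sum c S2" if "y \<in> S2"
    using counter_step_le_prefix_closed[OF _ C2 S2(1) _ that y(2)] S2 o2 c by simp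
  ultimately show ?thesis
    using y(1) by (auto simp: min_le_iff_disj)
qed

definition rr_invariant ::
  "nat \<Rightarrow> (nat \<Rightarrow> real) \<Rightarrow> nat list \<Rightarrow> nat list \<Rightarrow> real \<Rightarrow> (nat \<times> bool) list \<Rightarrow> real \<Rightarrow> real \<Rightarrow> bool"
where
  "rr_invariant n c o1 o2 K h C1 C2 \<longleftrightarrow>
     set (map fst h) \<subseteq> {1..n} \<and> cost c h = C1 + C2
     \<and> C1 \<le> min K (sum c (done_prefix o1 (set (map fst h))))
     \<and> C2 \<le> min K (sum c (done_prefix o2 (set (map fst h))))"

lemma rr_invariant_swap: "rr_invariant n c o1 o2 K h C1 C2 \<longleftrightarrow> rr_invariant n c o2 o1 K h C2 C1"
  unfolding rr_invariant_def by (auto simp: add.commute)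

lemma rr_invariant_advance:
  fixes c :: "nat \<Rightarrow> real"
  assumes inv: "rr_invariant n c o1 o2 K h C1 C2"
    and o1: "set o1 = {1..n}" and o2: "set o2 = {1..n}" and c: "\<forall>j\<in>{1..n}. 0 \<le> c j"
    and untested: "\<not> set o1 \<subseteq> set (map fst h)"
    and below: "C1 + c (next_test o1 (set (map fst h))) \<le> K"
  shows "rr_invariant n c o1 o2 K (h @ [(next_test o1 (set (map fst h)), b)])
           (C1 + c (next_test o1 (set (map fst h)))) C2"
proof -
  let ?T = "set (map fst h)"
  let ?j = "next_test o1 ?T"
  have "?j \<in> {1..n}"
    using next_test_untested(1)[OF untested] o1 by simp
  moreover have "C1 + c ?j \<le> sum c (done_prefix o1 (insert ?j ?T))"
    using inv o1 c unfolding rr_invariant_def by (intro counter_step_le_done_prefix[OF _ _ untested]) auto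
  moreover have "sum c (done_prefix o2 ?T) \<le> sum c (done_prefix o2 (insert ?j ?T))"
    using o2 c by (intro sum_done_prefix_mono) auto
  ultimately show ?thesis
    using inv below unfolding rr_invariant_def by (auto simp: cost_snoc)
qed

lemma rr_run_cost_le:
  fixes c :: "nat \<Rightarrow> real"
  assumes o1: "set o1 = {1..n}" and o2: "set o2 = {1..n}" and c: "\<forall>j\<in>{1..n}. 0 \<le> c j"
    and S1: "prefix_closed o1 S1" "S1 \<subseteq> {1..n}" and S2: "prefix_closed o2 S2" "S2 \<subseteq> {1..n}"
    and certifies: "\<And>T. T \<subseteq> {1..n} \<Longrightarrow> S1 \<subseteq> T \<Longrightarrow> S2 \<subseteq> T \<Longrightarrow> determined n B t T X"
    and inv: "rr_invariant n c o1 o2 (sum c S1 + sum c S2) h C1 C2"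
  shows "cost c (rr_run n B t c o1 o2 tb X k C1 C2 h) \<le> 2 * (sum c S1 + sum c S2)"
  using inv
proof (induction k arbitrary: C1 C2 h)
  case 0
  then show ?case unfolding rr_invariant_def by simp
next
  case (Suc k)
  let ?T = "set (map fst h)" and ?K = "sum c S1 + sum c S2"
  show ?case
  proof (cases "determined n B t ?T X")
    case True
    then show ?thesis using Suc.prems unfolding rr_invariant_def by simp
  next
    case undetermined: False
    define j1 j2 where "j1 = next_test o1 ?T" and "j2 = next_test o2 ?T"
    have untested: "\<not> set o1 \<subseteq> ?T" "\<not> set o2 \<subseteq> ?T"
      using certifies[of ?T] Suc.prems undetermined o1 o2 S1(2) S2(2)
      unfolding rr_invariant_def by (metis subset_trans)+
    have min_le: "min (C1 + c j1) (C2 + c j2) \<le> ?K"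
      using Suc.prems unfolding rr_invariant_def j1_def j2_def
      by (intro rr_step_min_le[OF o1 o2 c S1 S2 certifies _ undetermined]) auto
    have unfold: "rr_run n B t c o1 o2 tb X (Suc k) C1 C2 h =
      (if C1 + c j1 < C2 + c j2 \<or> (C1 + c j1 = C2 + c j2 \<and> tb h)
       then rr_run n B t c o1 o2 tb X k (C1 + c j1) C2 (h @ [(j1, j1 \<in> X)])
       else rr_run n B t c o1 o2 tb X k C1 (C2 + c j2) (h @ [(j2, j2 \<in> X)]))"
      using undetermined unfolding j1_def j2_def next_test_def by (simp add: Let_def)
    show ?thesis
    proof (cases "C1 + c j1 < C2 + c j2 \<or> (C1 + c j1 = C2 + c j2 \<and> tb h)")
      case True
      with min_le have "C1 + c j1 \<le> ?K" by (simp add: min_def split: if_splits)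
      then have "rr_invariant n c o1 o2 ?K (h @ [(j1, j1 \<in> X)]) (C1 + c j1) C2"
        unfolding j1_def by (rule rr_invariant_advance[OF Suc.prems o1 o2 c untested(1)])
      then show ?thesis
        using Suc.IH unfold True by simp
    next
      case False
      with min_le have "C2 + c j2 \<le> ?K" by (simp add: min_def split: if_splits)
      then have "rr_invariant n c o2 o1 ?K (h @ [(j2, j2 \<in> X)]) (C2 + c j2) C1"
        unfolding j2_def
        by (rule rr_invariant_advance[OF rr_invariant_swap[THEN iffD1, OF Suc.prems] o2 o1 c untested(2)])
      then show ?thesis
        using Suc.IH[OF rr_invariant_swap[THEN iffD2]] unfold False by simp
    qed
  qed
qed

section \<open>The approximation guarantee\<close>

context score_thresholds
begin

definition succ_prefix :: "nat list \<Rightarrow> nat set \<Rightarrow> nat set" where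
  "succ_prefix os X = hitting_prefix os (succ_needed (card X)) X"

definition fail_prefix :: "nat list \<Rightarrow> nat set \<Rightarrow> nat set" where
  "fail_prefix os X = hitting_prefix os (fail_needed (card X)) ({1..n} - X)"

lemma determined_if_prefixes_tested:
  assumes o1: "is_order n o1" and o2: "is_order n o2" and X: "X \<subseteq> {1..n}" and T: "T \<subseteq> {1..n}"
    and tested: "fail_prefix o1 X \<subseteq> T" "succ_prefix o2 X \<subseteq> T"
  shows "determined n B t T X"
proof -
  have o1': "distinct o1" "set o1 = {1..n}" and o2': "distinct o2" "set o2 = {1..n}"
    using o1 o2 unfolding is_order_def by auto
  have cardX: "card X \<le> n" and card_compl: "card ({1..n} - X) = n - card X"
    using X card_mono[of "{1..n}" X] by (auto simp: card_Diff_subset finite_subset)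
  have "succ_needed (card X) = card (X \<inter> succ_prefix o2 X)"
    unfolding succ_prefix_def
    using card_inter_hitting_prefix[OF o2'(1)] o2'(2) X succ_needed_le[OF cardX] by simp
  also have "\<dots> \<le> card (T \<inter> X)"
    using tested(2) finite_subset[OF T] by (intro card_mono) auto
  finally have succ: "succ_needed (card X) \<le> card (T \<inter> X)" .
  have "fail_needed (card X) = card (({1..n} - X) \<inter> fail_prefix o1 X)"
    unfolding fail_prefix_def
    using card_inter_hitting_prefix[OF o1'(1)] o1'(2) fail_needed_le[OF cardX] card_compl by simp
  also have "\<dots> \<le> card (T - X)"
    using tested(1) T finite_subset[OF T] by (intro card_mono) auto
  finally show ?thesis
    using succ determined_iff_counts[OF T X] by simp
qed

lemma two_rr_cost_le:
  assumes c: "\<forall>j\<in>{1..n}. 0 \<le> c j" and o1: "is_order n o1" and o2: "is_order n o2"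
    and X: "X \<subseteq> {1..n}"
  shows "cost c (two_rr_outcome n B t c o1 o2 tb X)
           \<le> 2 * (sum c (fail_prefix o1 X) + sum c (succ_prefix o2 X))"
  unfolding two_rr_outcome_def
proof (rule rr_run_cost_le)
  have o1': "distinct o1" "set o1 = {1..n}" and o2': "distinct o2" "set o2 = {1..n}"
    using o1 o2 unfolding is_order_def by auto
  then show "set o1 = {1..n}" "set o2 = {1..n}" by simp_all
  show "prefix_closed o1 (fail_prefix o1 X)" "prefix_closed o2 (succ_prefix o2 X)"
    unfolding fail_prefix_def succ_prefix_def
    using o1'(1) o2'(1) finite_subset[OF X] by (auto intro!: prefix_closed_hitting_prefix)
  show fail_sub: "fail_prefix o1 X \<subseteq> {1..n}" and succ_sub: "succ_prefix o2 X \<subseteq> {1..n}"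
    unfolding fail_prefix_def succ_prefix_def
    using hitting_prefix_subset[of o1] hitting_prefix_subset[of o2] o1'(2) o2'(2) by blast+
  show "determined n B t T X"
    if "T \<subseteq> {1..n}" "fail_prefix o1 X \<subseteq> T" "succ_prefix o2 X \<subseteq> T" for T
    using determined_if_prefixes_tested[OF o1 o2 X that] .
  have "0 \<le> sum c (fail_prefix o1 X)" "0 \<le> sum c (succ_prefix o2 X)"
    using c fail_sub succ_sub by (auto intro!: sum_nonneg)
  moreover have "done_prefix os {} = {}" for os :: "nat list"
    unfolding done_prefix_def by (cases os) auto
  ultimately show "rr_invariant n c o1 o2 (sum c (fail_prefix o1 X) + sum c (succ_prefix o2 X)) [] 0 0"
    unfolding rr_invariant_def by (simp add: cost_def)
qed (use c in simp)

lemma expected_succ_prefix_cost_le: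
  assumes p: "\<forall>j\<in>{1..n}. 0 < p j \<and> p j < 1" and c: "\<forall>j\<in>{1..n}. 0 \<le> c j"
    and os: "is_order n os" "sorted (map (\<lambda>j. c j / p j) os)"
    and T: "\<And>X. X \<subseteq> {1..n} \<Longrightarrow> T X \<subseteq> {1..n} \<and> determined n B t (T X) X"
    and T_indep: "\<And>X X' j. X \<subseteq> {1..n} \<Longrightarrow> X' \<subseteq> {1..n} \<Longrightarrow> X - {j} = X' - {j}
                    \<Longrightarrow> j \<in> T X \<longleftrightarrow> j \<in> T X'"
  shows "(\<Sum>X\<in>Pow {1..n}. prob n p X * sum c (succ_prefix os X))
       \<le> (\<Sum>X\<in>Pow {1..n}. prob n p X * sum c (T X))"
  unfolding succ_prefix_def
proof (rule expected_hitting_prefix_cost_le[OF p c os])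
  fix Y j assume Y: "Y \<subseteq> {1..n}" and j: "j \<in> {1..n}"
  then show "succ_needed (card Y) \<le> succ_needed (card (insert j Y))"
    using card_mono[of "{1..n}" "insert j Y"] finite_subset[OF Y]
    by (intro succ_needed_mono) (auto simp: card_insert_le)
  show "j \<in> T Y \<longleftrightarrow> j \<in> T (insert j Y)"
    using Y j by (intro T_indep) auto
next
  fix Y assume Y: "Y \<subseteq> {1..n}"
  then show "T Y \<subseteq> {1..n}" using T[OF Y] by blast
  show "succ_needed (card Y) \<le> card (T Y \<inter> Y)"
    using T[OF Y] determined_iff_counts[OF conjunct1[OF T[OF Y]] Y] by blast
qed

lemma expected_fail_prefix_cost_le:
  assumes p: "\<forall>j\<in>{1..n}. 0 < p j \<and> p j < 1" and c: "\<forall>j\<in>{1..n}. 0 \<le> c j"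
    and os: "is_order n os" "sorted (map (\<lambda>j. c j / (1 - p j)) os)"
    and T: "\<And>X. X \<subseteq> {1..n} \<Longrightarrow> T X \<subseteq> {1..n} \<and> determined n B t (T X) X"
    and T_indep: "\<And>X X' j. X \<subseteq> {1..n} \<Longrightarrow> X' \<subseteq> {1..n} \<Longrightarrow> X - {j} = X' - {j}
                    \<Longrightarrow> j \<in> T X \<longleftrightarrow> j \<in> T X'"
  shows "(\<Sum>X\<in>Pow {1..n}. prob n p X * sum c (fail_prefix os X))
       \<le> (\<Sum>X\<in>Pow {1..n}. prob n p X * sum c (T X))"
proof -
  let ?q = "\<lambda>j. 1 - p j" and ?N = "{1..n}"
  have "(\<Sum>X\<in>Pow ?N. prob n p X * sum c (fail_prefix os X))
      = (\<Sum>Y\<in>Pow ?N. prob n ?q Y * sum c (hitting_prefix os (fail_needed (card (?N - Y))) Y))"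
    unfolding sum_Pow_complement[of n p] fail_prefix_def
    by (intro sum.cong refl) (auto simp: double_diff)
  also have "\<dots> \<le> (\<Sum>Y\<in>Pow ?N. prob n ?q Y * sum c (T (?N - Y)))"
  proof (rule expected_hitting_prefix_cost_le[OF _ c os])
    show "\<forall>j\<in>?N. 0 < ?q j \<and> ?q j < 1" using p by auto
    fix Y j assume Y: "Y \<subseteq> ?N" and j: "j \<in> ?N"
    have "card (?N - insert j Y) \<le> card (?N - Y)" by (intro card_mono) auto
    moreover have "card (?N - Y) \<le> n" using card_mono[of ?N "?N - Y"] by simp
    ultimately
    show "fail_needed (card (?N - Y)) \<le> fail_needed (card (?N - insert j Y))"
      by (rule fail_needed_antimono)
    show "j \<in> T (?N - Y) \<longleftrightarrow> j \<in> T (?N - insert j Y)"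
      by (intro T_indep) auto
  next
    fix Y assume Y: "Y \<subseteq> ?N"
    then show "T (?N - Y) \<subseteq> ?N" using T[of "?N - Y"] by blast
    have "T (?N - Y) - (?N - Y) = T (?N - Y) \<inter> Y" using T[of "?N - Y"] Y by auto
    then show "fail_needed (card (?N - Y)) \<le> card (T (?N - Y) \<inter> Y)"
      using T[of "?N - Y"] determined_iff_counts[of "T (?N - Y)" "?N - Y"] by auto
  qed
  also have "\<dots> = (\<Sum>X\<in>Pow ?N. prob n p X * sum c (T X))"
    by (rule sum_Pow_complement[symmetric])
  finally show ?thesis .
qed

lemma expected_cost_two_rr_le:
  assumes c: "\<forall>j\<in>{1..n}. 0 \<le> c j" and p: "\<forall>j\<in>{1..n}. 0 < p j \<and> p j < 1"
    and fail: "is_order n ord_fail" "sorted (map (\<lambda>j. c j / (1 - p j)) ord_fail)"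
    and succ: "is_order n ord_succ" "sorted (map (\<lambda>j. c j / p j) ord_succ)"
    and valid: "valid_strategy n \<sigma>"
  shows "expected_cost n p c (two_rr_outcome n B t c ord_fail ord_succ tb)
           \<le> 4 * expected_cost n p c (strategy_outcome n B t \<sigma>)"
proof -
  define T where "T X = set (map fst (strategy_outcome n B t \<sigma> X))" for X
  have T: "T X \<subseteq> {1..n} \<and> determined n B t (T X) X" if "X \<subseteq> {1..n}" for X
    using strategy_outcome_determined[OF valid that] unfolding T_def by blast
  have T_indep: "j \<in> T X \<longleftrightarrow> j \<in> T X'"
    if "X \<subseteq> {1..n}" "X' \<subseteq> {1..n}" "X - {j} = X' - {j}" for X X' j
    using strategy_outcome_tests_indep[OF that] unfolding T_def .
  have opt: "expected_cost n p c (strategy_outcome n B t \<sigma>) = (\<Sum>X\<in>Pow {1..n}. prob n p X * sum c (T X))"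
    unfolding expected_cost_def T_def
    using strategy_outcome_determined[OF valid] by (intro sum.cong refl) (simp add: cost_eq_sum)
  have "expected_cost n p c (two_rr_outcome n B t c ord_fail ord_succ tb)
      \<le> (\<Sum>X\<in>Pow {1..n}. prob n p X * (2 * (sum c (fail_prefix ord_fail X) + sum c (succ_prefix ord_succ X))))"
    unfolding expected_cost_def
    by (intro sum_mono mult_left_mono two_rr_cost_le prob_nonneg[OF p]) (use c fail succ in auto)
  also have "\<dots> = 2 * ((\<Sum>X\<in>Pow {1..n}. prob n p X * sum c (fail_prefix ord_fail X))
                      + (\<Sum>X\<in>Pow {1..n}. prob n p X * sum c (succ_prefix ord_succ X)))"
    unfolding sum.distrib[symmetric] sum_distrib_left[of "2::real"]
    by (intro sum.cong refl) (simp add: algebra_simps)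
  also have "\<dots> \<le> 2 * ((\<Sum>X\<in>Pow {1..n}. prob n p X * sum c (T X))
                      + (\<Sum>X\<in>Pow {1..n}. prob n p X * sum c (T X)))"
  proof (intro mult_left_mono add_mono)
    show "(\<Sum>X\<in>Pow {1..n}. prob n p X * sum c (fail_prefix ord_fail X))
        \<le> (\<Sum>X\<in>Pow {1..n}. prob n p X * sum c (T X))"
      by (rule expected_fail_prefix_cost_le[OF p c fail]) (fact T, fact T_indep)
    show "(\<Sum>X\<in>Pow {1..n}. prob n p X * sum c (succ_prefix ord_succ X))
        \<le> (\<Sum>X\<in>Pow {1..n}. prob n p X * sum c (T X))"
      by (rule expected_succ_prefix_cost_le[OF p c succ]) (fact T, fact T_indep)
  qed simp
  also have "\<dots> = 4 * expected_cost n p c (strategy_outcome n B t \<sigma>)"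
    unfolding opt by simp
  finally show ?thesis .
qed

end

theorem theorem2:
  fixes n B :: nat and t :: "nat \<Rightarrow> nat" and c p :: "nat \<Rightarrow> real"
    and ord_fail ord_succ :: "nat list"
    and tb :: "(nat \<times> bool) list \<Rightarrow> bool"
    and \<sigma> :: "(nat \<times> bool) list \<Rightarrow> nat"
  assumes c_nonneg: "\<forall>j\<in>{1..n}. c j \<ge> 0"
    and p_range: "\<forall>j\<in>{1..n}. 0 < p j \<and> p j < 1"
    and t_first: "t 1 = 0"
    and t_last: "t (B + 1) = n + 1"
    and t_incr: "\<forall>i\<in>{1..B}. t i < t (i + 1)"
    and fail_order: "is_order n ord_fail"
    and fail_sorted: "sorted (map (\<lambda>j. c j / (1 - p j)) ord_fail)"
    and succ_order: "is_order n ord_succ"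
    and succ_sorted: "sorted (map (\<lambda>j. c j / p j) ord_succ)"
    and opt_valid: "valid_strategy n \<sigma>"
  shows "expected_cost n p c (two_rr_outcome n B t c ord_fail ord_succ tb)
           \<le> 6 * expected_cost n p c (strategy_outcome n B t \<sigma>)"
proof -
  interpret score_thresholds n B t
    using t_first t_last t_incr by unfold_locales
  have "expected_cost n p c (two_rr_outcome n B t c ord_fail ord_succ tb)
      \<le> 4 * expected_cost n p c (strategy_outcome n B t \<sigma>)"
    using c_nonneg p_range fail_order fail_sorted succ_order succ_sorted opt_valid
    by (rule expected_cost_two_rr_le)
  moreover have "0 \<le> expected_cost n p c (strategy_outcome n B t \<sigma>)"
    unfolding expected_cost_def using strategy_outcome_determined[OF opt_valid] c_nonneg
    by (intro sum_nonneg mult_nonneg_nonneg prob_nonneg[OF p_range] cost_nonneg) auto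
  ultimately show ?thesis
    by linarith
qed

end
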